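(* Let $\mathbb{K}=(G,M,I)$ be a finite formal context and let $\mathcal{I}_P=\bigcup_{B\in\mathcal{C}} pKey(B)$ be the set of all passkeys (of all closed itemsets) of $\mathbb{K}$. Then $\mathcal{I}_P$ is an order ideal of $(2^M,\subseteq)$: if $X\in\mathcal{I}_P$ and $Y\subseteq X$, then $Y\in\mathcal{I}_P$, i.e. $Y$ is a passkey of the closed itemset $Y''$.
   Context: A formal context is a triple $(G,M,I)$ with $I\subseteq G\times M$. For $A\subseteq G$, $A'=\{m\in M\mid \forall g\in A:(g,m)\in I\}$; for $B\subseteq M$, $B'=\{g\in G\mid \forall m\in B:(g,m)\in I\}$. An itemset $B\subseteq M$ is closed if $B''=B$; $\mathcal{C}$ denotes the set of all closed itemsets. For a closed itemset $B$, its equivalence class is $Equiv(B)=\{Y\subseteq B\mid Y'=B'\}$. A key of $B$ is an itemset $X\in Equiv(B)$ such that $Y'\neq X'$ for every proper subset $Y\subsetneq X$; $Key(B)$ is the set of keys of $B$. A passkey of $B$ is a key of $B$ of minimum cardinality among all keys of $B$; $pKey(B)=\{X\in Key(B)\mid |X|=\min_{Y\in Key(B)}|Y|\}$. An order ideal of a poset $(P,\le)$ is a subset $\mathcal{I}\subseteq P$ such that $x\in\mathcal{I}$ and $y\le x$ imply $y\in\mathcal{I}$. *)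

theory Defs
  imports Main
begin

definition ext :: "'g set \<Rightarrow> ('g \<times> 'm) set \<Rightarrow> 'm set \<Rightarrow> 'g set" where
  "ext G I B = {g \<in> G. \<forall>m\<in>B. (g, m) \<in> I}"

definition intt :: "'m set \<Rightarrow> ('g \<times> 'm) set \<Rightarrow> 'g set \<Rightarrow> 'm set" where
  "intt M I A = {m \<in> M. \<forall>g\<in>A. (g, m) \<in> I}"

definition closure :: "'g set \<Rightarrow> 'm set \<Rightarrow> ('g \<times> 'm) set \<Rightarrow> 'm set \<Rightarrow> 'm set" where
  "closure G M I B = intt M I (ext G I B)"

definition closed_itemset :: "'g set \<Rightarrow> 'm set \<Rightarrow> ('g \<times> 'm) set \<Rightarrow> 'm set \<Rightarrow> bool" where
  "closed_itemset G M I B \<longleftrightarrow> B \<subseteq> M \<and> closure G M I B = B"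

definition Equiv_cls :: "'g set \<Rightarrow> ('g \<times> 'm) set \<Rightarrow> 'm set \<Rightarrow> 'm set set" where
  "Equiv_cls G I B = {Y. Y \<subseteq> B \<and> ext G I Y = ext G I B}"

definition Key :: "'g set \<Rightarrow> ('g \<times> 'm) set \<Rightarrow> 'm set \<Rightarrow> 'm set set" where
  "Key G I B = {X. X \<in> Equiv_cls G I B \<and> (\<forall>Y. Y \<subset> X \<longrightarrow> ext G I Y \<noteq> ext G I X)}"

definition pKey :: "'g set \<Rightarrow> ('g \<times> 'm) set \<Rightarrow> 'm set \<Rightarrow> 'm set set" where
  "pKey G I B = {X \<in> Key G I B. card X = Min (card ` Key G I B)}"

definition passkeys :: "'g set \<Rightarrow> 'm set \<Rightarrow> ('g \<times> 'm) set \<Rightarrow> 'm set set" where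
  "passkeys G M I = (\<Union>B \<in> {B. closed_itemset G M I B}. pKey G I B)"

end

theory Submission
  imports Defs
begin

text \<open>Replacing \<open>Y\<close> inside \<open>X\<close>
  by any set with the same extent does not change the extent of \<open>X\<close>. So a proper subset of \<open>Y\<close>
  with the extent of \<open>Y\<close> would give a proper subset of \<open>X\<close> with the extent of \<open>X\<close>, whence \<open>Y\<close> is
  a key of \<open>Y''\<close>; and a key of \<open>Y''\<close> smaller than \<open>Y\<close> would give a generator of \<open>B\<close> smaller
  than \<open>X\<close>, which contains a key of \<open>B\<close> smaller than the passkey \<open>X\<close>.\<close>

lemma ext_antimono: "A \<subseteq> B \<Longrightarrow> ext G I B \<subseteq> ext G I A"
  unfolding ext_def by auto

lemma ext_Un: "ext G I (A \<union> B) = ext G I A \<inter> ext G I B"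
  unfolding ext_def by auto

lemma ext_Un_Diff_replace:
  assumes "Y \<subseteq> X" and "ext G I Y' = ext G I Y"
  shows "ext G I (Y' \<union> (X - Y)) = ext G I X"
proof -
  have "X = Y \<union> (X - Y)" using assms(1) by blast
  then have "ext G I X = ext G I Y \<inter> ext G I (X - Y)" by (metis ext_Un)
  then show ?thesis by (simp add: ext_Un assms(2))
qed

lemma closure_subset: "closure G M I Y \<subseteq> M"
  unfolding closure_def intt_def by auto

lemma subset_closure: "Y \<subseteq> M \<Longrightarrow> Y \<subseteq> closure G M I Y"
  unfolding closure_def ext_def intt_def by auto

lemma closure_mono: "Y \<subseteq> X \<Longrightarrow> closure G M I Y \<subseteq> closure G M I X"
  unfolding closure_def intt_def using ext_antimono[of Y X G I] by auto

lemma ext_closure: "Y \<subseteq> M \<Longrightarrow> ext G I (closure G M I Y) = ext G I Y"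
proof
  assume "Y \<subseteq> M"
  then show "ext G I (closure G M I Y) \<subseteq> ext G I Y"
    by (rule ext_antimono[OF subset_closure])
  show "ext G I Y \<subseteq> ext G I (closure G M I Y)"
    unfolding closure_def ext_def intt_def by auto
qed

lemma closed_itemset_closure:
  assumes "Y \<subseteq> M"
  shows "closed_itemset G M I (closure G M I Y)"
proof -
  have "closure G M I (closure G M I Y) = intt M I (ext G I (closure G M I Y))"
    by (rule closure_def)
  also have "\<dots> = closure G M I Y" by (subst ext_closure[OF assms]) (simp add: closure_def)
  finally show ?thesis by (simp add: closed_itemset_def closure_subset)
qed

lemma closure_eq_if_ext_eq:
  "closed_itemset G M I B \<Longrightarrow> ext G I X = ext G I B \<Longrightarrow> closure G M I X = B"
  unfolding closed_itemset_def closure_def by simp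

lemma Key_iff:
  "X \<in> Key G I B \<longleftrightarrow>
     X \<subseteq> B \<and> ext G I X = ext G I B \<and> (\<forall>V. V \<subset> X \<longrightarrow> ext G I V \<noteq> ext G I X)"
  unfolding Key_def Equiv_cls_def by blast

lemma finite_Key: "finite B \<Longrightarrow> finite (Key G I B)"
  by (rule finite_subset[of _ "Pow B"]) (auto simp: Key_iff)

lemma pKey_card_le:
  "finite B \<Longrightarrow> X \<in> pKey G I B \<Longrightarrow> K \<in> Key G I B \<Longrightarrow> card X \<le> card K"
  unfolding pKey_def by (auto intro: Min_le finite_Key)

lemma pKeyI:
  assumes "finite B" and "X \<in> Key G I B" and "\<And>K. K \<in> Key G I B \<Longrightarrow> card X \<le> card K"
  shows "X \<in> pKey G I B"
proof -
  have "Min (card ` Key G I B) = card X"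
    by (rule Min_eqI) (use finite_Key[OF assms(1)] assms(2,3) in auto)
  then show ?thesis unfolding pKey_def using assms(2) by simp
qed

lemma exists_minimal_subset_same_ext:
  "finite Z \<Longrightarrow> \<exists>W\<subseteq>Z. ext G I W = ext G I Z \<and> (\<forall>V. V \<subset> W \<longrightarrow> ext G I V \<noteq> ext G I W)"
proof (induction "card Z" arbitrary: Z rule: less_induct)
  case less
  show ?case
  proof (cases "\<forall>V. V \<subset> Z \<longrightarrow> ext G I V \<noteq> ext G I Z")
    case True
    then show ?thesis by blast
  next
    case False
    then obtain V where V: "V \<subset> Z" "ext G I V = ext G I Z" by blast
    have "card V < card Z" using less.prems V(1) by (rule psubset_card_mono)
    moreover have "finite V" using V(1) less.prems by (meson finite_subset psubset_imp_subset)
    ultimately have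
      "\<exists>W\<subseteq>V. ext G I W = ext G I V \<and> (\<forall>U. U \<subset> W \<longrightarrow> ext G I U \<noteq> ext G I W)"
      by (rule less.hyps)
    then obtain W where W: "W \<subseteq> V" "ext G I W = ext G I V"
        "\<forall>U. U \<subset> W \<longrightarrow> ext G I U \<noteq> ext G I W"
      by blast
    have "W \<subseteq> Z" using W(1) V(1) by blast
    moreover have "ext G I W = ext G I Z" using W(2) V(2) by simp
    ultimately show ?thesis using W(3) by blast
  qed
qed

lemma exists_Key_card_le:
  assumes "finite Z" and "Z \<subseteq> B" and "ext G I Z = ext G I B"
  shows "\<exists>W\<in>Key G I B. card W \<le> card Z"
proof -
  obtain W where W: "W \<subseteq> Z" "ext G I W = ext G I Z"
      "\<forall>V. V \<subset> W \<longrightarrow> ext G I V \<noteq> ext G I W"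
    using exists_minimal_subset_same_ext[OF assms(1), of G I] by blast
  have "W \<subseteq> B" using W(1) assms(2) by (rule order_trans)
  with W(2,3) assms(3) have "W \<in> Key G I B" unfolding Key_iff by simp
  moreover have "card W \<le> card Z" using W(1) assms(1) by (rule card_mono[rotated])
  ultimately show ?thesis by blast
qed

lemma Key_subset_closure:
  assumes "X \<in> Key G I B" and "Y \<subseteq> X" and "Y \<subseteq> M"
  shows "Y \<in> Key G I (closure G M I Y)"
proof -
  have X_min: "\<forall>V. V \<subset> X \<longrightarrow> ext G I V \<noteq> ext G I X"
    using assms(1) unfolding Key_iff by (elim conjE)
  have Y_min: "\<forall>V. V \<subset> Y \<longrightarrow> ext G I V \<noteq> ext G I Y"
  proof (intro allI impI notI)
    fix V assume "V \<subset> Y" and "ext G I V = ext G I Y"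
    then have "ext G I (V \<union> (X - Y)) = ext G I X"
      by (simp add: ext_Un_Diff_replace[OF assms(2)])
    moreover have "V \<union> (X - Y) \<subset> X" using \<open>V \<subset> Y\<close> assms(2) by blast
    ultimately show False using X_min by simp
  qed
  have "Y \<subseteq> closure G M I Y" by (rule subset_closure[OF assms(3)])
  moreover have "ext G I Y = ext G I (closure G M I Y)"
    using ext_closure[OF assms(3), of G I] by simp
  ultimately show ?thesis using Y_min unfolding Key_iff by (intro conjI)
qed

lemma pKey_subset_card_le_Key_closure:
  assumes "finite M" and "closed_itemset G M I B" and "X \<in> pKey G I B" and "Y \<subseteq> X"
    and "K \<in> Key G I (closure G M I Y)"
  shows "card Y \<le> card K"
proof (rule ccontr)
  assume "\<not> card Y \<le> card K"
  have "B \<subseteq> M" using assms(2) unfolding closed_itemset_def by (elim conjE)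
  then have "finite B" using assms(1) by (rule finite_subset)
  have "X \<in> Key G I B" using assms(3) unfolding pKey_def by simp
  then have X: "X \<subseteq> B" "ext G I X = ext G I B" unfolding Key_iff by simp_all
  then have "finite X" using \<open>finite B\<close> by (simp add: finite_subset)
  have "Y \<subseteq> M" using assms(4) X(1) \<open>B \<subseteq> M\<close> by simp
  have K: "K \<subseteq> closure G M I Y" "ext G I K = ext G I Y"
    using assms(5) unfolding Key_iff ext_closure[OF \<open>Y \<subseteq> M\<close>] by simp_all
  have "closure G M I Y \<subseteq> B"
    using closure_mono[OF assms(4), of G M I] closure_eq_if_ext_eq[OF assms(2) X(2)] by simp
  define Z where "Z = K \<union> (X - Y)"
  have "Z \<subseteq> B" using K(1) X(1) \<open>closure G M I Y \<subseteq> B\<close> unfolding Z_def by blast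
  moreover have "ext G I Z = ext G I B"
    unfolding Z_def using ext_Un_Diff_replace[OF assms(4) K(2)] X(2) by simp
  moreover have "finite Z" using \<open>Z \<subseteq> B\<close> \<open>finite B\<close> by (simp add: finite_subset)
  ultimately obtain W where "W \<in> Key G I B" "card W \<le> card Z"
    using exists_Key_card_le[of Z B G I] by blast
  have "card Z \<le> card K + card (X - Y)" unfolding Z_def by (rule card_Un_le)
  also have "\<dots> < card Y + card (X - Y)" using \<open>\<not> card Y \<le> card K\<close> by simp
  also have "\<dots> = card X"
    using assms(4) \<open>finite X\<close> by (simp add: card_Diff_subset card_mono finite_subset)
  finally have "card W < card X" using \<open>card W \<le> card Z\<close> by simp
  with pKey_card_le[OF \<open>finite B\<close> assms(3) \<open>W \<in> Key G I B\<close>] show False by simp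
qed

theorem proposition2:
  fixes G :: "'g set" and M :: "'m set" and I :: "('g \<times> 'm) set"
  assumes "finite G" and "finite M" and "I \<subseteq> G \<times> M"
    and "X \<in> passkeys G M I" and "Y \<subseteq> X"
  shows "Y \<in> passkeys G M I \<and> Y \<in> pKey G I (closure G M I Y)"
proof -
  from assms(4) obtain B where B: "closed_itemset G M I B" "X \<in> pKey G I B"
    unfolding passkeys_def by blast
  have "X \<in> Key G I B" using B(2) by (simp add: pKey_def)
  then have "X \<subseteq> M" using B(1) by (auto simp: Key_iff closed_itemset_def)
  then have "Y \<subseteq> M" using assms(5) by blast
  have "Y \<in> pKey G I (closure G M I Y)"
  proof (rule pKeyI)
    show "finite (closure G M I Y)" using assms(2) closure_subset by (rule finite_subset[rotated])
    show "Y \<in> Key G I (closure G M I Y)"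
      using \<open>X \<in> Key G I B\<close> assms(5) \<open>Y \<subseteq> M\<close> by (rule Key_subset_closure)
  qed (rule pKey_subset_card_le_Key_closure[OF assms(2) B assms(5)])
  moreover have "closed_itemset G M I (closure G M I Y)"
    using \<open>Y \<subseteq> M\<close> by (rule closed_itemset_closure)
  ultimately show ?thesis unfolding passkeys_def by blast
qed

end
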